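(* Any solution $(\phi^{n+1},\mu^{n+1})\in\Phi_h\times M_h$ of the G$_\varepsilon$-scheme satisfies $$\int_\Omega\phi^{n+1}\,d\boldsymbol x=\int_\Omega\phi^n\,d\boldsymbol x$$ and $$\delta_tE_h(\phi^{n+1})+\int_\Omega\Big|\sqrt{M^G_\varepsilon(\phi^{n+1})}\,\nabla\mu^{n+1}\Big|^2d\boldsymbol x\le0,$$ where $E_h(\phi)=\int_\Omega\frac12|\nabla\phi|^2\,d\boldsymbol x+\int_\Omega I_h(F(\phi))\,d\boldsymbol x$.
   Context: $\Omega\subset\mathbb{R}^d$ ($d=1,2,3$) bounded, $\eta>0$, $\varepsilon\in(0,1/2)$. $F(\phi)=\frac1{4\eta^2}\phi^2(\phi-1)^2=F_c(\phi)+F_e(\phi)$ with $F_c(\phi)=\frac1{4\eta^2}(\phi^4-2\phi^3+\frac32\phi^2)$ and $F_e(\phi)=-\frac1{8\eta^2}\phi^2$. Time step $\Delta t=T/N$, $\delta_tf^{n+1}=(f^{n+1}-f^n)/\Delta t$. $\mathcal T_h$ is a structured triangulation of $\Omega$ (element size $\le h$) in which every element $I$ has vertices $\boldsymbol x_0,\boldsymbol x_1,\dots,\boldsymbol x_d$ with $\boldsymbol x_k-\boldsymbol x_0$ parallel to the $k$-th coordinate axis. $\Phi_h$ is the space of continuous piecewise $\mathbb{P}_1$ functions and $M_h$ the space of continuous piecewise $\mathbb{P}_k$ functions ($k\ge1$). $I_h$ is nodal $\mathbb{P}_1$ interpolation, $(f,g)_h=\int_\Omega I_h(fg)\,d\boldsymbol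 x$ (mass lumping), and $(\cdot,\cdot)$ is the $L^2(\Omega)$ product. Let $G(\phi)=\phi\ln\phi+(1-\phi)\ln(1-\phi)+1$, and $G_\varepsilon\in C^2(\mathbb{R})$ equal to $G$ on $[\varepsilon,1-\varepsilon]$ and to its second-order Taylor polynomial at $\varepsilon$ (resp. $1-\varepsilon$) for $\phi<\varepsilon$ (resp. $\phi>1-\varepsilon$); thus $G_\varepsilon''=1/M_\varepsilon$ where $M_\varepsilon(\phi)=\phi(1-\phi)$ truncated to $\varepsilon(1-\varepsilon)$ outside $[\varepsilon,1-\varepsilon]$. For $\phi\in\Phi_h$, $M^G_\varepsilon(\phi)$ is the piecewise constant diagonal matrix whose $k$-th diagonal entry on element $I$ is $\frac{\phi(\boldsymbol x_k)-\phi(\boldsymbol x_0)}{G_\varepsilon'(\phi(\boldsymbol x_k))-G_\varepsilon'(\phi(\boldsymbol x_0))}$ if $\phi(\boldsymbol x_k)\ne\phi(\boldsymbol x_0)$ and $1/G_\varepsilon''(\phi(\boldsymbol x_0))$ otherwise (these entries are $\ge0$). The G$_\varepsilon$-scheme: given $\phi^n\in\Phi_h$, find $(\phi^{n+1},\mu^{n+1})\in\Phi_h\times M_h$ with, for all $(\bar\phi,\bar\mu)\in\Phi_h\times M_h$, $\frac1{\Delta t}(\phi^{n+1}-\phi^n,\bar\mu)_h+(M^G_\varepsilon(\phi^{n+1})\nabla\mu^{n+1},\nabla\bar\mu)=0$ and $(\nabla\phi^{n+1},\nabla\bar\phi)+(I_h(F_c'(\phi^{n+1}))+I_h(F_e'(\phi^n)),\bar\phi)_h=(\mu^{n+1},\bar\phi)_h$.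 *)

theory Defs
  imports "HOL-Analysis.Analysis"
begin

definition F :: "real \<Rightarrow> real \<Rightarrow> real" where
  "F \<eta> \<phi> = (1 / (4 * \<eta>^2)) * \<phi>^2 * (\<phi> - 1)^2"

definition Fc :: "real \<Rightarrow> real \<Rightarrow> real" where
  "Fc \<eta> \<phi> = (1 / (4 * \<eta>^2)) * (\<phi>^4 - 2 * \<phi>^3 + (3/2) * \<phi>^2)"

definition Fe :: "real \<Rightarrow> real \<Rightarrow> real" where
  "Fe \<eta> \<phi> = - (1 / (8 * \<eta>^2)) * \<phi>^2"

definition G :: "real \<Rightarrow> real" where
  "G \<phi> = \<phi> * ln \<phi> + (1 - \<phi>) * ln (1 - \<phi>) + 1"

definition G1 :: "real \<Rightarrow> real" where
  "G1 \<phi> = ln \<phi> - ln (1 - \<phi>)"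

definition G2 :: "real \<Rightarrow> real" where
  "G2 \<phi> = 1 / (\<phi> * (1 - \<phi>))"

text \<open>G_eps: equal to G on [eps, 1-eps], second-order Taylor polynomial at eps
  (resp. 1-eps) below eps (resp. above 1-eps).\<close>
definition G_eps :: "real \<Rightarrow> real \<Rightarrow> real" where
  "G_eps \<epsilon> \<phi> =
     (if \<phi> < \<epsilon> then G \<epsilon> + G1 \<epsilon> * (\<phi> - \<epsilon>) + G2 \<epsilon> / 2 * (\<phi> - \<epsilon>)^2
      else if \<phi> > 1 - \<epsilon> then
        G (1 - \<epsilon>) + G1 (1 - \<epsilon>) * (\<phi> - (1 - \<epsilon>)) + G2 (1 - \<epsilon>) / 2 * (\<phi> - (1 - \<epsilon>))^2
      else G \<phi>)"

text \<open>An element is a pair (x0, hs): its vertices are x0 and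
  x_i = x0 + hs$i * e_i for each coordinate axis i (hs$i \<noteq> 0).\<close>
type_synonym 'd elem = "(real^'d) \<times> (real^'d)"

definition vtx :: "'d::finite elem \<Rightarrow> 'd \<Rightarrow> real^'d" where
  "vtx I i = fst I + (snd I $ i) *\<^sub>R axis i 1"

definition verts :: "'d::finite elem \<Rightarrow> (real^'d) set" where
  "verts I = insert (fst I) (range (vtx I))"

definition elem_set :: "'d::finite elem \<Rightarrow> (real^'d) set" where
  "elem_set I = convex hull (verts I)"

definition struct_mesh :: "'d::finite elem set \<Rightarrow> (real^'d) set \<Rightarrow> real \<Rightarrow> bool" where
  "struct_mesh T \<Omega> h \<longleftrightarrow>
     finite T \<and> T \<noteq> {} \<and>
     (\<forall>I\<in>T. \<forall>i. snd I $ i \<noteq> 0) \<and>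
     (\<forall>I\<in>T. diameter (elem_set I) \<le> h) \<and>
     \<Omega> = (\<Union>I\<in>T. elem_set I) \<and>
     (\<forall>I\<in>T. \<forall>J\<in>T. I \<noteq> J \<longrightarrow>
         interior (elem_set I) \<inter> interior (elem_set J) = {} \<and>
         elem_set I \<inter> elem_set J = convex hull (verts I \<inter> verts J))"

text \<open>The element of T containing x (arbitrary choice on inter-element boundaries,
  which are Lebesgue-null).\<close>
definition elem_of :: "'d::finite elem set \<Rightarrow> real^'d \<Rightarrow> 'd elem" where
  "elem_of T x = (SOME I. I \<in> T \<and> x \<in> elem_set I)"

text \<open>Nodal P1 interpolant on one element (barycentric coordinates of an
  axis-aligned simplex are (x - x0)$i / hs$i).\<close>
definition interp_elem :: "'d::finite elem \<Rightarrow> (real^'d \<Rightarrow> real) \<Rightarrow> real^'d \<Rightarrow> real" where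
  "interp_elem I w x =
     w (fst I) + (\<Sum>i\<in>UNIV. (w (vtx I i) - w (fst I)) * ((x - fst I) $ i) / (snd I $ i))"

definition Ih :: "'d::finite elem set \<Rightarrow> (real^'d \<Rightarrow> real) \<Rightarrow> real^'d \<Rightarrow> real" where
  "Ih T w x = interp_elem (elem_of T x) w x"

definition lumped :: "'d::finite elem set \<Rightarrow> (real^'d) set \<Rightarrow> (real^'d \<Rightarrow> real) \<Rightarrow> (real^'d \<Rightarrow> real) \<Rightarrow> real" where
  "lumped T \<Omega> f g = integral \<Omega> (Ih T (\<lambda>x. f x * g x))"

definition Phi_h :: "'d::finite elem set \<Rightarrow> (real^'d) set \<Rightarrow> (real^'d \<Rightarrow> real) set" where
  "Phi_h T \<Omega> = {f. continuous_on \<Omega> f \<and>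
      (\<forall>I\<in>T. \<exists>a (b::real^'d). \<forall>x\<in>elem_set I. f x = a + b \<bullet> x)}"

definition poly_deg_le :: "nat \<Rightarrow> (real^'d::finite \<Rightarrow> real) \<Rightarrow> (real^'d) set \<Rightarrow> bool" where
  "poly_deg_le k f S \<longleftrightarrow>
     (\<exists>(A :: ('d \<Rightarrow> nat) set) c. finite A \<and> (\<forall>\<alpha>\<in>A. (\<Sum>i\<in>UNIV. \<alpha> i) \<le> k) \<and>
        (\<forall>x\<in>S. f x = (\<Sum>\<alpha>\<in>A. c \<alpha> * (\<Prod>i\<in>UNIV. (x $ i) ^ (\<alpha> i)))))"

definition M_h :: "'d::finite elem set \<Rightarrow> (real^'d) set \<Rightarrow> nat \<Rightarrow> (real^'d \<Rightarrow> real) set" where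
  "M_h T \<Omega> k = {f. continuous_on \<Omega> f \<and> (\<forall>I\<in>T. poly_deg_le k f (elem_set I))}"

definition grad :: "(real^'d::finite \<Rightarrow> real) \<Rightarrow> real^'d \<Rightarrow> real^'d" where
  "grad f x = (\<chi> i. frechet_derivative f (at x) (axis i 1))"

definition diag_mat :: "real^'d::finite \<Rightarrow> real^'d^'d" where
  "diag_mat v = (\<chi> i j. if i = j then v $ i else 0)"

definition MG_entry :: "real \<Rightarrow> (real^'d::finite \<Rightarrow> real) \<Rightarrow> 'd elem \<Rightarrow> 'd \<Rightarrow> real" where
  "MG_entry \<epsilon> \<phi> I i =
     (let a = \<phi> (fst I); b = \<phi> (vtx I i) in
      if b \<noteq> a then (b - a) / (deriv (G_eps \<epsilon>) b - deriv (G_eps \<epsilon>) a)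
      else 1 / deriv (deriv (G_eps \<epsilon>)) a)"

definition MG :: "'d::finite elem set \<Rightarrow> real \<Rightarrow> (real^'d \<Rightarrow> real) \<Rightarrow> real^'d \<Rightarrow> real^'d^'d" where
  "MG T \<epsilon> \<phi> x = diag_mat (\<chi> i. MG_entry \<epsilon> \<phi> (elem_of T x) i)"

definition sqrtMG :: "'d::finite elem set \<Rightarrow> real \<Rightarrow> (real^'d \<Rightarrow> real) \<Rightarrow> real^'d \<Rightarrow> real^'d^'d" where
  "sqrtMG T \<epsilon> \<phi> x = diag_mat (\<chi> i. sqrt (MG_entry \<epsilon> \<phi> (elem_of T x) i))"

definition Eh :: "'d::finite elem set \<Rightarrow> (real^'d) set \<Rightarrow> real \<Rightarrow> (real^'d \<Rightarrow> real) \<Rightarrow> real" where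
  "Eh T \<Omega> \<eta> \<phi> = integral \<Omega> (\<lambda>x. (1/2) * (norm (grad \<phi> x))^2)
                   + integral \<Omega> (Ih T (\<lambda>x. F \<eta> (\<phi> x)))"

end

theory Submission
  imports Defs
begin

text \<open>Testing the first equation of the scheme with the constant 1 gives conservation of mass.
  Testing the second equation with \<open>\<phi>\<^sup>n\<^sup>+\<^sup>1 - \<phi>\<^sup>n\<close> and the first with \<open>\<mu>\<^sup>n\<^sup>+\<^sup>1\<close> bounds the energy
  increment by \<open>-\<Delta>t\<close> times the mobility term. For the gradient part this is
  \<open>|a|\<^sup>2/2 - |b|\<^sup>2/2 \<le> a \<bullet> (a - b)\<close>; for the potential part, the splitting of \<open>F\<close> into the convex
  \<open>F\<^sub>c\<close> and the concave \<open>F\<^sub>e\<close> gives \<open>F a - F b \<le> (F\<^sub>c' a + F\<^sub>e' b) (a - b)\<close> at every node, and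
  mass lumping reduces the integrated inequality to these nodal ones, because the P1
  interpolant has nonnegative barycentric weights. The mobility term is
  \<open>|\<surd>M \<nabla>\<mu>|\<^sup>2\<close> because every entry of \<open>M\<^sup>G\<^sub>\<epsilon>\<close> is nonnegative, \<open>G\<^sub>\<epsilon>'\<close> being strictly increasing.\<close>

section \<open>The potentials and the mobility matrix\<close>

lemma DERIV_if_less_glue:
  fixes f g :: "real \<Rightarrow> real"
  assumes "DERIV f c :> D" "DERIV g c :> D" "f c = g c"
  shows "DERIV (\<lambda>x. if x < c then f x else g x) c :> D"
proof -
  have "((\<lambda>x. if x \<in> {..<c} then f x else g x) has_vector_derivative
          (if c \<in> {..<c} then D else D)) (at c within UNIV)"
    by (rule has_vector_derivative_If_within_closures[where T="{c..}"])
       (use assms in \<open>auto simp: has_real_derivative_iff_has_vector_derivative[symmetric]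
                     intro: has_field_derivative_at_within\<close>)
  then show ?thesis by (simp add: has_real_derivative_iff_has_vector_derivative)
qed

lemma DERIV_piecewise3:
  fixes f q r :: "real \<Rightarrow> real"
  assumes "a < b"
    and q: "\<And>x. DERIV q x :> q' x" and r: "\<And>x. DERIV r x :> r' x"
    and f: "\<And>x. a \<le> x \<Longrightarrow> x \<le> b \<Longrightarrow> DERIV f x :> f' x"
    and qa: "q a = f a" "q' a = f' a" and rb: "r b = f b" "r' b = f' b"
  shows "DERIV (\<lambda>x. if x < a then q x else if x > b then r x else f x) x
           :> (if x < a then q' x else if x > b then r' x else f' x)"
    (is "DERIV ?h x :> _")
proof -
  consider "x < a" | "x = a" | "a < x" "x < b" | "x = b" | "x > b"
    using \<open>a < b\<close> by linarith
  then show ?thesis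
  proof cases
    case 1
    have "DERIV ?h x :> q' x"
      using 1 by (intro has_field_derivative_transform_within_open[OF q, of "{..<a}"]) auto
    with 1 show ?thesis by simp
  next
    case 2
    have glue: "DERIV (\<lambda>y. if y < a then q y else f y) a :> f' a"
      by (rule DERIV_if_less_glue) (use q[of a] f[of a] qa \<open>a < b\<close> in simp_all)
    have "DERIV ?h a :> f' a"
      by (rule has_field_derivative_transform_within_open[OF glue, of "{..<b}"])
         (use \<open>a < b\<close> in auto)
    with 2 \<open>a < b\<close> show ?thesis by simp
  next
    case 3
    have "DERIV ?h x :> f' x"
      using 3 by (intro has_field_derivative_transform_within_open[OF f, of x "{a<..<b}"]) auto
    with 3 show ?thesis by simp
  next
    case 4
    have glue: "DERIV (\<lambda>y. if y < b then f y else r y) b :> f' b"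
      by (rule DERIV_if_less_glue) (use r[of b] f[of b] rb \<open>a < b\<close> in simp_all)
    have "DERIV ?h b :> f' b"
      by (rule has_field_derivative_transform_within_open[OF glue, of "{a<..}"])
         (use \<open>a < b\<close> rb in auto)
    with 4 \<open>a < b\<close> show ?thesis by simp
  next
    case 5
    have "DERIV ?h x :> r' x"
      using 5 \<open>a < b\<close> by (intro has_field_derivative_transform_within_open[OF r, of "{b<..}"]) auto
    with 5 \<open>a < b\<close> show ?thesis by simp
  qed
qed

lemma DERIV_G: "0 < x \<Longrightarrow> x < 1 \<Longrightarrow> DERIV G x :> G1 x"
  unfolding G_def G1_def by (rule derivative_eq_intros refl | simp)+

lemma DERIV_G1: "0 < x \<Longrightarrow> x < 1 \<Longrightarrow> DERIV G1 x :> G2 x"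
  unfolding G1_def G2_def by (rule derivative_eq_intros refl | simp)+ (simp add: field_simps)

definition G1_eps :: "real \<Rightarrow> real \<Rightarrow> real" where
  "G1_eps \<epsilon> \<phi> =
     (if \<phi> < \<epsilon> then G1 \<epsilon> + G2 \<epsilon> * (\<phi> - \<epsilon>)
      else if \<phi> > 1 - \<epsilon> then G1 (1 - \<epsilon>) + G2 (1 - \<epsilon>) * (\<phi> - (1 - \<epsilon>))
      else G1 \<phi>)"

definition G2_eps :: "real \<Rightarrow> real \<Rightarrow> real" where
  "G2_eps \<epsilon> \<phi> = (if \<phi> < \<epsilon> then G2 \<epsilon> else if \<phi> > 1 - \<epsilon> then G2 (1 - \<epsilon>) else G2 \<phi>)"

lemma DERIV_G_eps:
  assumes "0 < \<epsilon>" "\<epsilon> < 1/2"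
  shows "DERIV (G_eps \<epsilon>) x :> G1_eps \<epsilon> x"
  unfolding G_eps_def[abs_def] G1_eps_def
  by (rule DERIV_piecewise3) (use assms in \<open>auto intro!: derivative_eq_intros DERIV_G\<close>)

lemma DERIV_G1_eps:
  assumes "0 < \<epsilon>" "\<epsilon> < 1/2"
  shows "DERIV (G1_eps \<epsilon>) x :> G2_eps \<epsilon> x"
  unfolding G1_eps_def[abs_def] G2_eps_def
  by (rule DERIV_piecewise3) (use assms in \<open>auto intro!: derivative_eq_intros DERIV_G1\<close>)

lemma G2_eps_pos: "0 < \<epsilon> \<Longrightarrow> \<epsilon> < 1/2 \<Longrightarrow> G2_eps \<epsilon> x > 0"
  unfolding G2_eps_def G2_def by auto

lemma deriv_G_eps: "0 < \<epsilon> \<Longrightarrow> \<epsilon> < 1/2 \<Longrightarrow> deriv (G_eps \<epsilon>) = G1_eps \<epsilon>"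
  using DERIV_G_eps DERIV_imp_deriv by blast

lemma deriv_G1_eps: "0 < \<epsilon> \<Longrightarrow> \<epsilon> < 1/2 \<Longrightarrow> deriv (G1_eps \<epsilon>) = G2_eps \<epsilon>"
  using DERIV_G1_eps DERIV_imp_deriv by blast

lemma strict_mono_G1_eps:
  assumes "0 < \<epsilon>" "\<epsilon> < 1/2"
  shows "strict_mono (G1_eps \<epsilon>)"
  by (rule strict_monoI, rule DERIV_pos_imp_increasing)
     (use DERIV_G1_eps[OF assms] G2_eps_pos[OF assms] in blast)+

lemma MG_entry_nonneg:
  assumes "0 < \<epsilon>" "\<epsilon> < 1/2"
  shows "MG_entry \<epsilon> \<phi> I i \<ge> 0"
proof -
  have "(b - a) / (G1_eps \<epsilon> b - G1_eps \<epsilon> a) \<ge> 0" if "a < b" for a b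
    using strict_monoD[OF strict_mono_G1_eps[OF assms] that] that by simp
  then have "(b - a) / (G1_eps \<epsilon> b - G1_eps \<epsilon> a) \<ge> 0" if "b \<noteq> a" for a b
    using that by (metis minus_diff_eq minus_divide_divide neq_iff)
  then show ?thesis
    unfolding MG_entry_def Let_def deriv_G_eps[OF assms] deriv_G1_eps[OF assms]
    using G2_eps_pos[OF assms] by (simp add: less_imp_le)
qed

lemma diag_mat_mult_vec_nth: "(diag_mat m *v v) $ i = m $ i * v $ i"
proof -
  have "(if i = j then m $ i else 0) * v $ j = (if i = j then m $ j * v $ j else 0)" for j
    by simp
  then show ?thesis unfolding diag_mat_def matrix_vector_mult_def by simp
qed

lemma diag_mat_quadratic_form:
  assumes "\<And>i. m i \<ge> 0"
  shows "(diag_mat (\<chi> i. m i) *v v) \<bullet> v = (norm (diag_mat (\<chi> i. sqrt (m i)) *v v))\<^sup>2"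
  using assms by (simp add: power2_norm_eq_inner inner_vec_def diag_mat_mult_vec_nth algebra_simps)

lemma MG_quadratic_form:
  assumes "0 < \<epsilon>" "\<epsilon> < 1/2"
  shows "(MG T \<epsilon> \<phi> x *v v) \<bullet> v = (norm (sqrtMG T \<epsilon> \<phi> x *v v))\<^sup>2"
  unfolding MG_def sqrtMG_def
  by (rule diag_mat_quadratic_form) (rule MG_entry_nonneg[OF assms])

lemma deriv_Fc: "deriv (Fc \<eta>) a = (1 / (4 * \<eta>^2)) * (4 * a^3 - 6 * a^2 + 3 * a)"
proof -
  have "DERIV (Fc \<eta>) a :> (1 / (4 * \<eta>^2)) * (4 * a^3 - 6 * a^2 + 3 * a)"
    unfolding Fc_def[abs_def] by (rule derivative_eq_intros refl | simp)+
  then show ?thesis by (rule DERIV_imp_deriv)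
qed

lemma deriv_Fe: "deriv (Fe \<eta>) a = - (1 / (4 * \<eta>^2)) * a"
proof -
  have "DERIV (Fe \<eta>) a :> - (1 / (4 * \<eta>^2)) * a"
    unfolding Fe_def[abs_def] by (rule derivative_eq_intros refl | simp)+
  then show ?thesis by (rule DERIV_imp_deriv)
qed

lemma F_diff_le_convex_splitting:
  assumes "\<eta> > 0"
  shows "F \<eta> a - F \<eta> b \<le> (deriv (Fc \<eta>) a + deriv (Fe \<eta>) b) * (a - b)"
proof -
  define c where "c = 1 / (4 * \<eta>^2)"
  have "c > 0" using assms by (simp add: c_def)
  have "((4 * a^3 - 6 * a^2 + 3 * a) - b) * (a - b) - (a^2 * (a - 1)^2 - b^2 * (b - 1)^2)
      = (a - b)^2 * ((a + b - 1)^2 + 2 * (a - 1/2)^2 + 1/2)"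
    by (simp add: field_simps power2_eq_square power3_eq_cube)
  also have "\<dots> \<ge> 0" by simp
  finally have "a^2 * (a - 1)^2 - b^2 * (b - 1)^2 \<le> ((4 * a^3 - 6 * a^2 + 3 * a) - b) * (a - b)"
    by simp
  have "F \<eta> a - F \<eta> b = c * (a^2 * (a - 1)^2 - b^2 * (b - 1)^2)"
    by (simp add: F_def c_def algebra_simps)
  also have "\<dots> \<le> c * (((4 * a^3 - 6 * a^2 + 3 * a) - b) * (a - b))"
    using \<open>c > 0\<close> \<open>a^2 * (a - 1)^2 - b^2 * (b - 1)^2 \<le> _\<close> by (simp add: mult_left_mono)
  also have "\<dots> = (deriv (Fc \<eta>) a + deriv (Fe \<eta>) b) * (a - b)"
    unfolding deriv_Fc deriv_Fe c_def[symmetric] by (simp add: algebra_simps)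
  finally show ?thesis .
qed

section \<open>P1 interpolation on an element\<close>

lemma convex_sets_of_affine_fun:
  fixes f :: "'a::real_vector \<Rightarrow> real"
  assumes "\<And>u v x y. u + v = 1 \<Longrightarrow> f (u *\<^sub>R x + v *\<^sub>R y) = u * f x + v * f y"
  shows "convex {x. 0 \<le> f x}" "convex {x. f x = 0}"
  unfolding convex_def using assms by auto

definition bary :: "'d::finite elem \<Rightarrow> 'd \<Rightarrow> real^'d \<Rightarrow> real" where
  "bary I i x = (x - fst I) $ i / (snd I $ i)"

definition bary0 :: "'d::finite elem \<Rightarrow> real^'d \<Rightarrow> real" where
  "bary0 I x = 1 - (\<Sum>i\<in>UNIV. bary I i x)"

lemma interp_elem_bary:
  "interp_elem I w x = bary0 I x * w (fst I) + (\<Sum>i\<in>UNIV. bary I i x * w (vtx I i))"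
proof -
  have "interp_elem I w x = w (fst I) + (\<Sum>i\<in>UNIV. (w (vtx I i) - w (fst I)) * bary I i x)"
    by (simp add: interp_elem_def bary_def)
  also have "\<dots> = bary0 I x * w (fst I) + (\<Sum>i\<in>UNIV. bary I i x * w (vtx I i))"
    by (simp add: bary0_def algebra_simps sum_subtractf sum_distrib_left sum_distrib_right)
  finally show ?thesis .
qed

lemma bary_affine:
  assumes "u + v = 1"
  shows "bary I i (u *\<^sub>R x + v *\<^sub>R y) = u * bary I i x + v * bary I i y"
proof -
  have "u *\<^sub>R (x - fst I) + v *\<^sub>R (y - fst I) = u *\<^sub>R x + v *\<^sub>R y - (u + v) *\<^sub>R fst I"
    by (simp add: algebra_simps)
  then have "u *\<^sub>R x + v *\<^sub>R y - fst I = u *\<^sub>R (x - fst I) + v *\<^sub>R (y - fst I)"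
    using assms by simp
  then show ?thesis unfolding bary_def by (simp add: add_divide_distrib)
qed

lemma bary0_affine:
  "u + v = 1 \<Longrightarrow> bary0 I (u *\<^sub>R x + v *\<^sub>R y) = u * bary0 I x + v * bary0 I y"
  unfolding bary0_def using bary_affine[of u v I]
  by (simp add: sum.distrib sum_distrib_left algebra_simps)

lemma bary_fst: "bary I j (fst I) = 0"
  by (simp add: bary_def)

lemma bary_vtx: "snd I $ j \<noteq> 0 \<Longrightarrow> bary I j (vtx I i) = (if j = i then 1 else 0)"
  by (auto simp: bary_def vtx_def axis_def)

lemma bary0_fst: "bary0 I (fst I) = 1"
  by (simp add: bary0_def bary_fst)

lemma bary0_vtx: "\<forall>j. snd I $ j \<noteq> 0 \<Longrightarrow> bary0 I (vtx I i) = 0"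
  by (simp add: bary0_def bary_vtx)

lemma verts_subset_elem_set: "verts I \<subseteq> elem_set I"
  unfolding elem_set_def by (rule hull_subset)

lemma bary_nonneg:
  assumes nd: "\<forall>j. snd I $ j \<noteq> 0" and x: "x \<in> elem_set I"
  shows "bary I i x \<ge> 0" "bary0 I x \<ge> 0"
proof -
  have "elem_set I \<subseteq> {x. 0 \<le> bary I i x}"
    unfolding elem_set_def
    by (rule hull_minimal) (use nd in \<open>auto simp: verts_def bary_fst bary_vtx
                                      intro: convex_sets_of_affine_fun bary_affine\<close>)
  then show "bary I i x \<ge> 0" using x by auto
  have "elem_set I \<subseteq> {x. 0 \<le> bary0 I x}"
    unfolding elem_set_def
    by (rule hull_minimal) (use nd in \<open>auto simp: verts_def bary0_fst bary0_vtx
                                      intro: convex_sets_of_affine_fun bary0_affine\<close>)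
  then show "bary0 I x \<ge> 0" using x by auto
qed

lemma interp_elem_mono:
  assumes nd: "\<forall>j. snd I $ j \<noteq> 0" and x: "x \<in> elem_set I"
    and le: "\<And>v. v \<in> verts I \<Longrightarrow> w v \<le> w' v"
  shows "interp_elem I w x \<le> interp_elem I w' x"
proof -
  have "bary0 I x * w (fst I) \<le> bary0 I x * w' (fst I)"
    using le bary_nonneg[OF nd x] by (intro mult_left_mono) (auto simp: verts_def)
  moreover have "(\<Sum>i\<in>UNIV. bary I i x * w (vtx I i)) \<le> (\<Sum>i\<in>UNIV. bary I i x * w' (vtx I i))"
    using le bary_nonneg[OF nd x] by (intro sum_mono mult_left_mono) (auto simp: verts_def)
  ultimately show ?thesis unfolding interp_elem_bary by linarith
qed

lemma interp_elem_diff: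
  "interp_elem I (\<lambda>y. w y - w' y) x = interp_elem I w x - interp_elem I w' x"
  unfolding interp_elem_bary by (simp add: algebra_simps sum_subtractf)

lemma interp_elem_affine:
  assumes nd: "\<forall>j. snd I $ j \<noteq> 0" and f: "\<forall>y\<in>elem_set I. f y = a + b \<bullet> y"
    and x: "x \<in> elem_set I"
  shows "interp_elem I f x = f x"
proof -
  have f_verts: "\<forall>y\<in>verts I. f y = a + b \<bullet> y"
    using f verts_subset_elem_set by blast
  then have "f (vtx I i) - f (fst I) = snd I $ i * b $ i" for i
    by (simp add: verts_def vtx_def inner_add_right inner_axis inner_commute)
  then have "interp_elem I f x = f (fst I) + (\<Sum>i\<in>UNIV. b $ i * (x - fst I) $ i)"
    unfolding interp_elem_def using nd by (intro arg_cong2[where f="(+)"] refl sum.cong) auto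
  also have "\<dots> = f (fst I) + b \<bullet> (x - fst I)" by (simp add: inner_vec_def)
  also have "\<dots> = f x" using f_verts f x by (simp add: verts_def inner_diff_right)
  finally show ?thesis .
qed

lemma interp_elem_vertex:
  assumes nd: "\<forall>j. snd I $ j \<noteq> 0" and v: "v \<in> verts I"
  shows "interp_elem I w v = w v"
proof (cases "v = fst I")
  case True then show ?thesis by (simp add: interp_elem_bary bary0_fst bary_fst)
next
  case False
  then obtain m where m: "v = vtx I m" using v by (auto simp: verts_def)
  have "bary I i (vtx I m) * w (vtx I i) = (if m = i then w (vtx I i) else 0)" for i
    using nd by (auto simp: bary_vtx)
  then show ?thesis unfolding interp_elem_bary m bary0_vtx[OF nd] by simp
qed

lemma vertex_notin_hull_other_verts:
  assumes nd: "\<forall>j. snd I $ j \<noteq> 0" and v: "v \<in> verts I"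
  shows "v \<notin> convex hull (verts I - {v})"
proof -
  obtain coord where aff: "\<And>s t x y. s + t = 1 \<Longrightarrow> coord (s *\<^sub>R x + t *\<^sub>R y) = s * coord x + t * coord y"
    and one: "coord v = 1" and zero: "\<And>u. u \<in> verts I - {v} \<Longrightarrow> coord u = 0"
  proof (cases "v = fst I")
    case True
    show ?thesis
      by (rule that[of "bary0 I"]) (use True nd in \<open>auto simp: verts_def bary0_affine bary0_fst bary0_vtx\<close>)
  next
    case False
    then obtain m where m: "v = vtx I m" using v by (auto simp: verts_def)
    show ?thesis
      by (rule that[of "bary I m"]) (use m nd in \<open>auto simp: verts_def bary_affine bary_fst bary_vtx\<close>)
  qed
  have "convex hull (verts I - {v}) \<subseteq> {x. coord x = 0}"
    by (rule hull_minimal) (use zero convex_sets_of_affine_fun(2)[OF aff] in auto)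
  with one show ?thesis by auto
qed

section \<open>Conforming meshes and integration over them\<close>

lemma struct_mesh_nondegenerate: "struct_mesh T \<Omega> h \<Longrightarrow> I \<in> T \<Longrightarrow> \<forall>j. snd I $ j \<noteq> 0"
  unfolding struct_mesh_def by blast

lemma elem_set_subset_Omega: "struct_mesh T \<Omega> h \<Longrightarrow> I \<in> T \<Longrightarrow> elem_set I \<subseteq> \<Omega>"
  unfolding struct_mesh_def by blast

lemma elem_of_mem:
  assumes "struct_mesh T \<Omega> h" and "x \<in> \<Omega>"
  shows "elem_of T x \<in> T" "x \<in> elem_set (elem_of T x)"
proof -
  have "\<exists>I. I \<in> T \<and> x \<in> elem_set I" using assms unfolding struct_mesh_def by blast
  then show "elem_of T x \<in> T" "x \<in> elem_set (elem_of T x)"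
    unfolding elem_of_def by (metis (mono_tags, lifting) someI_ex)+
qed

lemma vertex_of_elem_containing:
  assumes M: "struct_mesh T \<Omega> h" and I: "I \<in> T" and J: "J \<in> T"
    and v: "v \<in> verts I" and vJ: "v \<in> elem_set J"
  shows "v \<in> verts J"
proof (rule ccontr)
  assume "v \<notin> verts J"
  with v have "I \<noteq> J" by auto
  then have "elem_set I \<inter> elem_set J = convex hull (verts I \<inter> verts J)"
    using M I J unfolding struct_mesh_def by blast
  also have "\<dots> \<subseteq> convex hull (verts I - {v})"
    using \<open>v \<notin> verts J\<close> by (intro hull_mono) auto
  finally have "v \<in> convex hull (verts I - {v})"
    using v vJ verts_subset_elem_set by blast
  then show False
    using vertex_notin_hull_other_verts[OF struct_mesh_nondegenerate[OF M I] v] by contradiction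
qed

lemma Ih_vertex:
  assumes M: "struct_mesh T \<Omega> h" and I: "I \<in> T" and v: "v \<in> verts I"
  shows "Ih T w v = w v"
proof -
  have "v \<in> \<Omega>" using elem_set_subset_Omega[OF M I] verts_subset_elem_set v by blast
  note J = elem_of_mem[OF M this]
  have "v \<in> verts (elem_of T v)" by (rule vertex_of_elem_containing[OF M I J(1) v J(2)])
  then show ?thesis
    unfolding Ih_def by (rule interp_elem_vertex[OF struct_mesh_nondegenerate[OF M J(1)]])
qed

lemma Ih_diff: "Ih T (\<lambda>y. w y - w' y) = (\<lambda>x. Ih T w x - Ih T w' x)"
  unfolding Ih_def interp_elem_diff ..

lemma Phi_h_affine_on_elem:
  "f \<in> Phi_h T \<Omega> \<Longrightarrow> I \<in> T \<Longrightarrow> \<exists>a b. \<forall>x\<in>elem_set I. f x = a + b \<bullet> x"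
  unfolding Phi_h_def by blast

lemma Phi_h_diff:
  assumes "f \<in> Phi_h T \<Omega>" "g \<in> Phi_h T \<Omega>"
  shows "(\<lambda>x. f x - g x) \<in> Phi_h T \<Omega>"
proof -
  have "\<exists>a b. \<forall>x\<in>elem_set I. f x - g x = a + b \<bullet> x" if I: "I \<in> T" for I
  proof -
    obtain a1 b1 a2 b2 where "\<forall>x\<in>elem_set I. f x = a1 + b1 \<bullet> x" "\<forall>x\<in>elem_set I. g x = a2 + b2 \<bullet> x"
      using Phi_h_affine_on_elem[OF assms(1) I] Phi_h_affine_on_elem[OF assms(2) I] by blast
    then have "\<forall>x\<in>elem_set I. f x - g x = (a1 - a2) + (b1 - b2) \<bullet> x"
      by (simp add: inner_diff_left)
    then show ?thesis by blast
  qed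
  with assms show ?thesis unfolding Phi_h_def by (auto intro: continuous_on_diff)
qed

lemma Ih_Phi_h:
  assumes M: "struct_mesh T \<Omega> h" and f: "f \<in> Phi_h T \<Omega>" and x: "x \<in> \<Omega>"
  shows "Ih T f x = f x"
proof -
  note J = elem_of_mem[OF M x]
  obtain a b where "\<forall>y\<in>elem_set (elem_of T x). f y = a + b \<bullet> y"
    using Phi_h_affine_on_elem[OF f J(1)] by blast
  then show ?thesis
    unfolding Ih_def by (rule interp_elem_affine[OF struct_mesh_nondegenerate[OF M J(1)] _ J(2)])
qed

definition mesh_skeleton :: "'d::finite elem set \<Rightarrow> (real^'d) set" where
  "mesh_skeleton T =
     (\<Union>I\<in>T. frontier (elem_set I)) \<union> (\<Union>I\<in>T. \<Union>J\<in>T - {I}. elem_set I \<inter> elem_set J)"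

lemma compact_elem_set: "compact (elem_set I)"
  unfolding elem_set_def verts_def by (rule finite_imp_compact_convex_hull) simp

lemma negligible_elem_set_Int:
  assumes M: "struct_mesh T \<Omega> h" and "I \<in> T" "J \<in> T" "I \<noteq> J"
  shows "negligible (elem_set I \<inter> elem_set J)"
proof -
  have hull: "elem_set I \<inter> elem_set J = convex hull (verts I \<inter> verts J)"
    and disjoint: "interior (elem_set I) \<inter> interior (elem_set J) = {}"
    using assms unfolding struct_mesh_def by blast+
  have "interior (elem_set I \<inter> elem_set J) = {}" using disjoint by (simp add: interior_Int)
  then show ?thesis unfolding hull by (simp add: negligible_convex_interior)
qed

lemma negligible_mesh_skeleton:
  assumes M: "struct_mesh T \<Omega> h"
  shows "negligible (mesh_skeleton T)"
proof -
  have fin: "finite T" using M unfolding struct_mesh_def by blast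
  have "negligible (\<Union>I\<in>T. frontier (elem_set I))"
    using fin by (intro negligible_Union) (auto simp: elem_set_def intro: negligible_convex_frontier)
  moreover have "negligible (\<Union>J\<in>T - {I}. elem_set I \<inter> elem_set J)" if "I \<in> T" for I
    using fin negligible_elem_set_Int[OF M that] by (intro negligible_Union) auto
  then have "negligible (\<Union>I\<in>T. \<Union>J\<in>T - {I}. elem_set I \<inter> elem_set J)"
    using fin by (intro negligible_Union) auto
  ultimately show ?thesis unfolding mesh_skeleton_def by (rule negligible_Un)
qed

lemma off_mesh_skeleton:
  assumes M: "struct_mesh T \<Omega> h" and I: "I \<in> T" and x: "x \<in> elem_set I - mesh_skeleton T"
  shows "elem_of T x = I" "x \<in> interior (elem_set I)"
proof -
  have "x \<in> \<Omega>" using elem_set_subset_Omega[OF M I] x by blast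
  note J = elem_of_mem[OF M this]
  show "elem_of T x = I"
    using J I x unfolding mesh_skeleton_def by blast
  have "x \<notin> frontier (elem_set I)" using I x unfolding mesh_skeleton_def by blast
  then show "x \<in> interior (elem_set I)"
    using x compact_elem_set[of I] by (simp add: frontier_def compact_imp_closed)
qed

lemma integrable_on_compact_continuous:
  fixes f :: "'a::euclidean_space \<Rightarrow> real"
  assumes "compact S" "continuous_on S f"
  shows "f integrable_on S"
proof -
  have "(\<lambda>x. indicator S x *\<^sub>R f x) integrable_on UNIV"
    by (rule integrable_on_lborel, rule borel_integrable_compact[OF assms])
  also have "(\<lambda>x. indicator S x *\<^sub>R f x) = (\<lambda>x. if x \<in> S then f x else 0)"
    by (auto simp: indicator_def)
  finally show ?thesis by (simp only: integrable_restrict_UNIV)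
qed

lemma integrable_on_mesh_piecewise_continuous:
  fixes f :: "real^'d::finite \<Rightarrow> real"
  assumes M: "struct_mesh T \<Omega> h"
    and pw: "\<And>I. I \<in> T \<Longrightarrow> \<exists>g. continuous_on UNIV g \<and> (\<forall>x\<in>elem_set I - mesh_skeleton T. f x = g x)"
  shows "f integrable_on \<Omega>"
proof -
  have fin: "finite T" and Om: "\<Omega> = \<Union>(elem_set ` T)" using M unfolding struct_mesh_def by blast+
  have "f integrable_on elem_set I" if I: "I \<in> T" for I
  proof -
    obtain g where g: "continuous_on UNIV g" "\<forall>x\<in>elem_set I - mesh_skeleton T. f x = g x"
      using pw[OF I] by blast
    have "g integrable_on elem_set I"
      by (rule integrable_on_compact_continuous[OF compact_elem_set continuous_on_subset[OF g(1)]]) simp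
    then show ?thesis
      by (rule integrable_spike[OF _ negligible_mesh_skeleton[OF M]]) (use g(2) in auto)
  qed
  then have "(f has_integral (\<Sum>S\<in>elem_set ` T. integral S f)) (\<Union>(elem_set ` T))"
  proof (intro has_integral_Union)
    show "pairwise (\<lambda>S S'. negligible (S \<inter> S')) (elem_set ` T)"
      unfolding pairwise_def using negligible_elem_set_Int[OF M] by auto
  qed (use fin in auto)
  then show ?thesis unfolding Om by blast
qed

lemma integral_le_off_negligible:
  fixes f g :: "'a::euclidean_space \<Rightarrow> real"
  assumes f: "f integrable_on S" and g: "g integrable_on S" and N: "negligible N"
    and le: "\<And>x. x \<in> S - N \<Longrightarrow> f x \<le> g x"
  shows "integral S f \<le> integral S g"
proof -
  let ?f = "\<lambda>x. if x \<in> N then 0 else f x" and ?g = "\<lambda>x. if x \<in> N then 0 else g x"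
  have "integral S ?f \<le> integral S ?g"
  proof (rule integral_le)
    show "?f integrable_on S" by (rule integrable_spike[OF f N]) auto
    show "?g integrable_on S" by (rule integrable_spike[OF g N]) auto
  qed (use le in auto)
  moreover have "integral S f = integral S ?f" "integral S g = integral S ?g"
    by (rule integral_spike[OF N], simp)+
  ultimately show ?thesis by simp
qed

lemma grad_affine:
  fixes f :: "real^'d::finite \<Rightarrow> real"
  assumes f: "\<forall>y\<in>S. f y = a + b \<bullet> y" and x: "x \<in> interior S"
  shows "grad f x = b"
proof -
  have "((\<lambda>y. a + b \<bullet> y) has_derivative (\<lambda>h. b \<bullet> h)) (at x)"
    by (rule derivative_eq_intros refl)+ simp
  then have "(f has_derivative (\<lambda>h. b \<bullet> h)) (at x)"
    by (rule has_derivative_transform_within_open[OF _ open_interior x])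
       (use f interior_subset in \<open>metis subsetD\<close>)
  then have "frechet_derivative f (at x) = (\<lambda>h. b \<bullet> h)"
    by (simp add: frechet_derivative_at[symmetric])
  then show ?thesis
    unfolding grad_def by (simp add: vec_eq_iff inner_axis)
qed

lemma grad_off_mesh_skeleton:
  assumes M: "struct_mesh T \<Omega> h" and I: "I \<in> T" and x: "x \<in> elem_set I - mesh_skeleton T"
    and f: "\<forall>y\<in>elem_set I. f y = a + b \<bullet> y"
  shows "grad f x = b"
  by (rule grad_affine[OF f off_mesh_skeleton(2)[OF M I x]])

lemma Phi_h_integrable:
  assumes M: "struct_mesh T \<Omega> h" and f: "f \<in> Phi_h T \<Omega>"
  shows "f integrable_on \<Omega>"
proof (rule integrable_on_mesh_piecewise_continuous[OF M])
  fix I assume "I \<in> T"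
  then obtain a b where "\<forall>x\<in>elem_set I. f x = a + b \<bullet> x" using Phi_h_affine_on_elem[OF f] by blast
  moreover have "continuous_on UNIV (\<lambda>x. a + b \<bullet> x)" by (intro continuous_intros)
  ultimately show "\<exists>g. continuous_on UNIV g \<and> (\<forall>x\<in>elem_set I - mesh_skeleton T. f x = g x)"
    by blast
qed

lemma Ih_integrable:
  assumes M: "struct_mesh T \<Omega> h"
  shows "Ih T w integrable_on \<Omega>"
proof (rule integrable_on_mesh_piecewise_continuous[OF M])
  fix I assume I: "I \<in> T"
  have "continuous_on UNIV (interp_elem I w)"
    unfolding interp_elem_def
    by (intro continuous_intros) (use struct_mesh_nondegenerate[OF M I] in auto)
  moreover have "\<forall>x\<in>elem_set I - mesh_skeleton T. Ih T w x = interp_elem I w x"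
    using off_mesh_skeleton(1)[OF M I] by (auto simp: Ih_def)
  ultimately show "\<exists>g. continuous_on UNIV g \<and> (\<forall>x\<in>elem_set I - mesh_skeleton T. Ih T w x = g x)"
    by blast
qed

lemma grad_Phi_h_integrable:
  assumes M: "struct_mesh T \<Omega> h" and f: "f \<in> Phi_h T \<Omega>" and g: "g \<in> Phi_h T \<Omega>"
  shows "(\<lambda>x. H (grad f x) (grad g x) :: real) integrable_on \<Omega>"
proof (rule integrable_on_mesh_piecewise_continuous[OF M])
  fix I assume I: "I \<in> T"
  obtain a1 b1 a2 b2 where f_aff: "\<forall>x\<in>elem_set I. f x = a1 + b1 \<bullet> x"
    and g_aff: "\<forall>x\<in>elem_set I. g x = a2 + b2 \<bullet> x"
    using Phi_h_affine_on_elem[OF f I] Phi_h_affine_on_elem[OF g I] by blast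
  show "\<exists>c. continuous_on UNIV c \<and> (\<forall>x\<in>elem_set I - mesh_skeleton T. H (grad f x) (grad g x) = c x)"
    by (intro exI[of _ "\<lambda>x. H b1 b2"])
       (use grad_off_mesh_skeleton[OF M I _ f_aff] grad_off_mesh_skeleton[OF M I _ g_aff] in auto)
qed

section \<open>The discrete energy inequality\<close>

lemma integral_Ih_mono:
  assumes M: "struct_mesh T \<Omega> h"
    and le: "\<And>I v. I \<in> T \<Longrightarrow> v \<in> verts I \<Longrightarrow> w v \<le> w' v"
  shows "integral \<Omega> (Ih T w) \<le> integral \<Omega> (Ih T w')"
proof (rule integral_le[OF Ih_integrable[OF M] Ih_integrable[OF M]])
  fix x assume "x \<in> \<Omega>"
  note J = elem_of_mem[OF M this]
  show "Ih T w x \<le> Ih T w' x"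
    unfolding Ih_def
    by (rule interp_elem_mono[OF struct_mesh_nondegenerate[OF M J(1)] J(2) le[OF J(1)]])
qed

lemma lumped_commute: "lumped T \<Omega> f g = lumped T \<Omega> g f"
  unfolding lumped_def by (simp add: mult.commute)

lemma lumped_one:
  assumes "struct_mesh T \<Omega> h" "f \<in> Phi_h T \<Omega>"
  shows "lumped T \<Omega> f (\<lambda>_. 1) = integral \<Omega> f"
  unfolding lumped_def using Ih_Phi_h[OF assms] by (simp cong: integral_cong)

lemma grad_const: "grad (\<lambda>_. c) x = 0"
  by (rule grad_affine[where S = UNIV and a = c]) auto

lemma const_in_M_h: "(\<lambda>_. c) \<in> M_h T \<Omega> k"
  unfolding M_h_def poly_deg_le_def by (auto intro!: exI[of _ "{\<lambda>_. 0}"] exI[of _ "\<lambda>_. c"])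

lemma gradient_energy_diff_le:
  assumes M: "struct_mesh T \<Omega> h" and \<phi>: "\<phi> \<in> Phi_h T \<Omega>" and \<psi>: "\<psi> \<in> Phi_h T \<Omega>"
  shows "integral \<Omega> (\<lambda>x. (1/2) * (norm (grad \<phi> x))^2) - integral \<Omega> (\<lambda>x. (1/2) * (norm (grad \<psi> x))^2)
    \<le> integral \<Omega> (\<lambda>x. grad \<phi> x \<bullet> grad (\<lambda>y. \<phi> y - \<psi> y) x)"
proof -
  have i\<phi>: "(\<lambda>x. (1/2) * (norm (grad \<phi> x))^2) integrable_on \<Omega>"
    using grad_Phi_h_integrable[OF M \<phi> \<phi>, of "\<lambda>u v. (1/2) * (norm u)^2"] by simp
  have i\<psi>: "(\<lambda>x. (1/2) * (norm (grad \<psi> x))^2) integrable_on \<Omega>"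
    using grad_Phi_h_integrable[OF M \<psi> \<psi>, of "\<lambda>u v. (1/2) * (norm u)^2"] by simp
  have "(\<lambda>x. grad \<phi> x \<bullet> grad (\<lambda>y. \<phi> y - \<psi> y) x) integrable_on \<Omega>"
    using grad_Phi_h_integrable[OF M \<phi> Phi_h_diff[OF \<phi> \<psi>], of "(\<bullet>)"] by simp
  then have "integral \<Omega> (\<lambda>x. (1/2) * (norm (grad \<phi> x))^2 - (1/2) * (norm (grad \<psi> x))^2)
      \<le> integral \<Omega> (\<lambda>x. grad \<phi> x \<bullet> grad (\<lambda>y. \<phi> y - \<psi> y) x)"
  proof (rule integral_le_off_negligible[OF integrable_diff[OF i\<phi> i\<psi>] _ negligible_mesh_skeleton[OF M]])
    fix x assume x: "x \<in> \<Omega> - mesh_skeleton T"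
    from x obtain I where I: "I \<in> T" and xI: "x \<in> elem_set I - mesh_skeleton T"
      using M unfolding struct_mesh_def by blast
    obtain a1 b1 a2 b2 where \<phi>_aff: "\<forall>y\<in>elem_set I. \<phi> y = a1 + b1 \<bullet> y"
      and \<psi>_aff: "\<forall>y\<in>elem_set I. \<psi> y = a2 + b2 \<bullet> y"
      using Phi_h_affine_on_elem[OF \<phi> I] Phi_h_affine_on_elem[OF \<psi> I] by blast
    then have "\<forall>y\<in>elem_set I. \<phi> y - \<psi> y = (a1 - a2) + (b1 - b2) \<bullet> y"
      by (simp add: inner_diff_left)
    note grads = grad_off_mesh_skeleton[OF M I xI \<phi>_aff] grad_off_mesh_skeleton[OF M I xI \<psi>_aff]
      grad_off_mesh_skeleton[OF M I xI this]
    have "0 \<le> (1/2) * ((b1 - b2) \<bullet> (b1 - b2))" by simp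
    then show "(1/2) * (norm (grad \<phi> x))^2 - (1/2) * (norm (grad \<psi> x))^2
      \<le> grad \<phi> x \<bullet> grad (\<lambda>y. \<phi> y - \<psi> y) x"
      unfolding grads power2_norm_eq_inner
      by (simp add: inner_commute algebra_simps)
  qed
  then show ?thesis using integral_diff[OF i\<phi> i\<psi>] by simp
qed

lemma potential_energy_diff_le:
  assumes M: "struct_mesh T \<Omega> h" and \<eta>: "\<eta> > 0"
  shows "integral \<Omega> (Ih T (\<lambda>x. F \<eta> (\<phi> x))) - integral \<Omega> (Ih T (\<lambda>x. F \<eta> (\<psi> x)))
    \<le> lumped T \<Omega> (\<lambda>x. Ih T (\<lambda>y. deriv (Fc \<eta>) (\<phi> y)) x + Ih T (\<lambda>y. deriv (Fe \<eta>) (\<psi> y)) x)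
         (\<lambda>x. \<phi> x - \<psi> x)"
proof -
  have "integral \<Omega> (Ih T (\<lambda>x. F \<eta> (\<phi> x))) - integral \<Omega> (Ih T (\<lambda>x. F \<eta> (\<psi> x)))
      = integral \<Omega> (Ih T (\<lambda>x. F \<eta> (\<phi> x) - F \<eta> (\<psi> x)))"
    unfolding Ih_diff by (rule integral_diff[OF Ih_integrable[OF M] Ih_integrable[OF M], symmetric])
  also have "\<dots> \<le> lumped T \<Omega> (\<lambda>x. Ih T (\<lambda>y. deriv (Fc \<eta>) (\<phi> y)) x + Ih T (\<lambda>y. deriv (Fe \<eta>) (\<psi> y)) x)
         (\<lambda>x. \<phi> x - \<psi> x)"
    unfolding lumped_def
    by (rule integral_Ih_mono[OF M])
       (simp add: Ih_vertex[OF M] F_diff_le_convex_splitting[OF \<eta>])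
  finally show ?thesis .
qed

lemma Eh_diff_le:
  assumes M: "struct_mesh T \<Omega> h" and \<eta>: "\<eta> > 0"
    and \<phi>: "\<phi> \<in> Phi_h T \<Omega>" and \<psi>: "\<psi> \<in> Phi_h T \<Omega>"
  shows "Eh T \<Omega> \<eta> \<phi> - Eh T \<Omega> \<eta> \<psi>
    \<le> integral \<Omega> (\<lambda>x. grad \<phi> x \<bullet> grad (\<lambda>y. \<phi> y - \<psi> y) x)
       + lumped T \<Omega> (\<lambda>x. Ih T (\<lambda>y. deriv (Fc \<eta>) (\<phi> y)) x + Ih T (\<lambda>y. deriv (Fe \<eta>) (\<psi> y)) x)
           (\<lambda>x. \<phi> x - \<psi> x)"
  using gradient_energy_diff_le[OF M \<phi> \<psi>] potential_energy_diff_le[OF M \<eta>, of \<phi> \<psi>]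
  unfolding Eh_def by linarith

theorem lemma4:
  fixes T :: "'d::finite elem set" and \<Omega> :: "(real^'d) set"
    and h \<eta> \<epsilon> \<Delta>t :: real and k :: nat
    and \<phi>n \<phi>1 \<mu>1 :: "real^'d \<Rightarrow> real"
  assumes dim: "CARD('d) \<le> 3"
    and mesh: "struct_mesh T \<Omega> h"
    and eta: "\<eta> > 0"
    and eps: "0 < \<epsilon>" "\<epsilon> < 1/2"
    and dt: "\<Delta>t > 0"
    and k: "k \<ge> 1"
    and phin: "\<phi>n \<in> Phi_h T \<Omega>"
    and phi1: "\<phi>1 \<in> Phi_h T \<Omega>"
    and mu1: "\<mu>1 \<in> M_h T \<Omega> k"
    and eq1: "\<forall>\<mu>b \<in> M_h T \<Omega> k.
        (1 / \<Delta>t) * lumped T \<Omega> (\<lambda>x. \<phi>1 x - \<phi>n x) \<mu>b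
        + integral \<Omega> (\<lambda>x. (MG T \<epsilon> \<phi>1 x *v grad \<mu>1 x) \<bullet> grad \<mu>b x) = 0"
    and eq2: "\<forall>\<phi>b \<in> Phi_h T \<Omega>.
        integral \<Omega> (\<lambda>x. grad \<phi>1 x \<bullet> grad \<phi>b x)
        + lumped T \<Omega> (\<lambda>x. Ih T (\<lambda>y. deriv (Fc \<eta>) (\<phi>1 y)) x
                          + Ih T (\<lambda>y. deriv (Fe \<eta>) (\<phi>n y)) x) \<phi>b
        = lumped T \<Omega> \<mu>1 \<phi>b"
  shows "integral \<Omega> \<phi>1 = integral \<Omega> \<phi>n \<and>
         (Eh T \<Omega> \<eta> \<phi>1 - Eh T \<Omega> \<eta> \<phi>n) / \<Delta>t
         + integral \<Omega> (\<lambda>x. (norm (sqrtMG T \<epsilon> \<phi>1 x *v grad \<mu>1 x))^2) \<le> 0"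
proof -
  define D where "D = (\<lambda>x. \<phi>1 x - \<phi>n x)"
  have D: "D \<in> Phi_h T \<Omega>"
    unfolding D_def by (rule Phi_h_diff[OF phi1 phin])
  have "lumped T \<Omega> D (\<lambda>_. 1) = 0"
    using eq1[rule_format, OF const_in_M_h] dt by (simp add: grad_const D_def)
  then have mass: "integral \<Omega> \<phi>1 = integral \<Omega> \<phi>n"
    using lumped_one[OF mesh D]
      integral_diff[OF Phi_h_integrable[OF mesh phi1] Phi_h_integrable[OF mesh phin]]
    by (simp add: D_def)
  have "Eh T \<Omega> \<eta> \<phi>1 - Eh T \<Omega> \<eta> \<phi>n \<le> lumped T \<Omega> D \<mu>1"
    using Eh_diff_le[OF mesh eta phi1 phin] eq2[rule_format, OF D] lumped_commute[of T \<Omega> \<mu>1 D]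
    by (simp add: D_def)
  then have "(Eh T \<Omega> \<eta> \<phi>1 - Eh T \<Omega> \<eta> \<phi>n) / \<Delta>t \<le> lumped T \<Omega> D \<mu>1 / \<Delta>t"
    using dt by (simp add: divide_right_mono)
  moreover have "lumped T \<Omega> D \<mu>1 / \<Delta>t
      + integral \<Omega> (\<lambda>x. (norm (sqrtMG T \<epsilon> \<phi>1 x *v grad \<mu>1 x))^2) = 0"
    using eq1[rule_format, OF mu1] by (simp add: MG_quadratic_form[OF eps] D_def)
  ultimately show ?thesis
    using mass by linarith
qed

end
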